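(* Let $\pi,\hat\pi\in\mathcal S_n$, $\eta,\hat\eta\in\mathcal S_d$, $M\in\mathbb{C}_{\mathrm{Biso}}(\pi,\eta)$, and $p,h\in\mathbb{R}$ with $h\ge 0$. Then \[ \mathcal L_{p,2h}(\hat\pi,\hat\eta)\leq 2\big(\mathcal R_{p-h,h}(\hat\pi)+\mathcal C_{p+h,h}(\hat\eta)\big)\wedge 2\big(\mathcal C_{p-h,h}(\hat\eta)+\mathcal R_{p+h,h}(\hat\pi)\big), \] and \[ \mathcal L_{p,h}(\hat\pi,\hat\eta)\geq \mathcal R_{p,h}(\hat\pi)\vee\mathcal C_{p,h}(\hat\eta). \]
   Context: A matrix is bi-isotonic if it is non-increasing along each row and each column. $\mathbb{C}_{\mathrm{Biso}}(\pi,\eta)$ is the set of $M\in[0,1]^{n\times d}$ such that $(M_{\pi^{-1}(i)\eta^{-1}(j)})_{ij}$ is bi-isotonic. $\mathcal{L}_{p,h}(\hat\pi,\hat\eta)=|\{(i,j): M_{\pi^{-1}(i)\eta^{-1}(j)}\leq p-h,\ M_{\hat\pi^{-1}(i)\hat\eta^{-1}(j)}\geq p+h\}|+|\{(i,j): M_{\pi^{-1}(i)\eta^{-1}(j)}\geq p+h,\ M_{\hat\pi^{-1}(i)\hat\eta^{-1}(j)}\leq p-h\}|$ (with $(i,j)$ ranging over $[n]\times[d]$). $\mathcal R_{p,h}(\hat\pi)=|\{(i,j): M_{\pi^{-1}(i)j}\leq p-h,\ M_{\hat\pi^{-1}(i)j}\geq p+h\}|+|\{(i,j): M_{\pi^{-1}(i)j}\geq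 p+h,\ M_{\hat\pi^{-1}(i)j}\leq p-h\}|$. $\mathcal C_{p,h}(\hat\eta)=|\{(i,j): M_{i\eta^{-1}(j)}\leq p-h,\ M_{i\hat\eta^{-1}(j)}\geq p+h\}|+|\{(i,j): M_{i\eta^{-1}(j)}\geq p+h,\ M_{i\hat\eta^{-1}(j)}\leq p-h\}|$. *)

theory Defs
  imports Complex_Main "HOL-Combinatorics.Permutations"
begin

text \<open>Matrices in [0,1]^{n x d} are functions nat => nat => real, indices 0..<n and 0..<d.
  Permutations of [n] are bijections permuting {..<n}; pi^{-1} is inv pi.\<close>

definition bi_isotonic :: "nat \<Rightarrow> nat \<Rightarrow> (nat \<Rightarrow> nat \<Rightarrow> real) \<Rightarrow> bool" where
  "bi_isotonic n d A \<longleftrightarrow>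
     (\<forall>i i' j. i \<le> i' \<and> i' < n \<and> j < d \<longrightarrow> A i' j \<le> A i j) \<and>
     (\<forall>i j j'. i < n \<and> j \<le> j' \<and> j' < d \<longrightarrow> A i j' \<le> A i j)"

definition CBiso :: "nat \<Rightarrow> nat \<Rightarrow> (nat \<Rightarrow> nat) \<Rightarrow> (nat \<Rightarrow> nat) \<Rightarrow> (nat \<Rightarrow> nat \<Rightarrow> real) set" where
  "CBiso n d \<pi> \<eta> = {M. (\<forall>i<n. \<forall>j<d. 0 \<le> M i j \<and> M i j \<le> 1) \<and>
                         bi_isotonic n d (\<lambda>i j. M (inv \<pi> i) (inv \<eta> j))}"

definition Lloss :: "nat \<Rightarrow> nat \<Rightarrow> (nat \<Rightarrow> nat \<Rightarrow> real) \<Rightarrow> (nat \<Rightarrow> nat) \<Rightarrow> (nat \<Rightarrow> nat)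
    \<Rightarrow> real \<Rightarrow> real \<Rightarrow> (nat \<Rightarrow> nat) \<Rightarrow> (nat \<Rightarrow> nat) \<Rightarrow> nat" where
  "Lloss n d M \<pi> \<eta> p h \<pi>h \<eta>h =
     card {(i,j) \<in> {..<n} \<times> {..<d}. M (inv \<pi> i) (inv \<eta> j) \<le> p - h \<and> M (inv \<pi>h i) (inv \<eta>h j) \<ge> p + h}
   + card {(i,j) \<in> {..<n} \<times> {..<d}. M (inv \<pi> i) (inv \<eta> j) \<ge> p + h \<and> M (inv \<pi>h i) (inv \<eta>h j) \<le> p - h}"

definition Rloss :: "nat \<Rightarrow> nat \<Rightarrow> (nat \<Rightarrow> nat \<Rightarrow> real) \<Rightarrow> (nat \<Rightarrow> nat)
    \<Rightarrow> real \<Rightarrow> real \<Rightarrow> (nat \<Rightarrow> nat) \<Rightarrow> nat" where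
  "Rloss n d M \<pi> p h \<pi>h =
     card {(i,j) \<in> {..<n} \<times> {..<d}. M (inv \<pi> i) j \<le> p - h \<and> M (inv \<pi>h i) j \<ge> p + h}
   + card {(i,j) \<in> {..<n} \<times> {..<d}. M (inv \<pi> i) j \<ge> p + h \<and> M (inv \<pi>h i) j \<le> p - h}"

definition Closs :: "nat \<Rightarrow> nat \<Rightarrow> (nat \<Rightarrow> nat \<Rightarrow> real) \<Rightarrow> (nat \<Rightarrow> nat)
    \<Rightarrow> real \<Rightarrow> real \<Rightarrow> (nat \<Rightarrow> nat) \<Rightarrow> nat" where
  "Closs n d M \<eta> p h \<eta>h =
     card {(i,j) \<in> {..<n} \<times> {..<d}. M i (inv \<eta> j) \<le> p - h \<and> M i (inv \<eta>h j) \<ge> p + h}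
   + card {(i,j) \<in> {..<n} \<times> {..<d}. M i (inv \<eta> j) \<ge> p + h \<and> M i (inv \<eta>h j) \<le> p - h}"

end

theory Submission
  imports Defs
begin

text \<open>Put the rows and columns of M in their true order, A i j = M (inv \<pi> i) (inv \<eta> j), so that
  A is bi-isotonic, and let \<rho>, \<kappa> be the residual row and column permutations. Then L, R and C
  compare A with A permuted by both \<rho> and \<kappa>, by \<rho> alone, and by \<kappa> alone.

  The upper bound is a triangle inequality through the matrix permuted in one direction only: an
  entry that moves from \<le> p - 2h to \<ge> p + 2h crosses the level p in one of the two steps.
  The lower bound holds row by row (and column by column): for non-increasing a and b,
  X = {a \<le> s} is an up-set and Y = {b \<ge> t} a down-set of {..<d}, so they are disjoint or cover
  {..<d}; in the latter case |X \<inter> Y| = |X| + |Y| - d, which cannot exceed |X \<inter> \<sigma>\<inverse>(Y)| for any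
  permutation \<sigma>.\<close>

definition crossings :: "nat \<Rightarrow> nat \<Rightarrow> (nat \<Rightarrow> nat \<Rightarrow> real) \<Rightarrow> (nat \<Rightarrow> nat \<Rightarrow> real)
    \<Rightarrow> real \<Rightarrow> real \<Rightarrow> nat" where
  "crossings n d F G a b = card {(i,j) \<in> {..<n} \<times> {..<d}. F i j \<le> a \<and> b \<le> G i j}"

definition level_loss :: "nat \<Rightarrow> nat \<Rightarrow> (nat \<Rightarrow> nat \<Rightarrow> real) \<Rightarrow> (nat \<Rightarrow> nat \<Rightarrow> real)
    \<Rightarrow> real \<Rightarrow> real \<Rightarrow> nat" where
  "level_loss n d F G p h = crossings n d F G (p - h) (p + h) + crossings n d G F (p - h) (p + h)"

lemma Lloss_eq_level_loss:
  "Lloss n d M \<pi> \<eta> p h \<pi>h \<eta>h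
     = level_loss n d (\<lambda>i j. M (inv \<pi> i) (inv \<eta> j)) (\<lambda>i j. M (inv \<pi>h i) (inv \<eta>h j)) p h"
  unfolding Lloss_def level_loss_def crossings_def
  by (intro arg_cong2[where f="(+)"] arg_cong[where f=card]) auto

lemma Rloss_eq_level_loss:
  "Rloss n d M \<pi> p h \<pi>h = level_loss n d (\<lambda>i j. M (inv \<pi> i) j) (\<lambda>i j. M (inv \<pi>h i) j) p h"
  unfolding Rloss_def level_loss_def crossings_def
  by (intro arg_cong2[where f="(+)"] arg_cong[where f=card]) auto

lemma Closs_eq_level_loss:
  "Closs n d M \<eta> p h \<eta>h = level_loss n d (\<lambda>i j. M i (inv \<eta> j)) (\<lambda>i j. M i (inv \<eta>h j)) p h"
  unfolding Closs_def level_loss_def crossings_def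
  by (intro arg_cong2[where f="(+)"] arg_cong[where f=card]) auto

lemma crossings_transpose:
  "crossings n d F G a b = crossings d n (\<lambda>j i. F i j) (\<lambda>j i. G i j) a b"
proof -
  have "{(i,j) \<in> {..<n} \<times> {..<d}. F i j \<le> a \<and> b \<le> G i j}
      = prod.swap ` {(j,i) \<in> {..<d} \<times> {..<n}. F i j \<le> a \<and> b \<le> G i j}"
    by auto
  then show ?thesis
    unfolding crossings_def by (simp add: card_image)
qed

lemma level_loss_transpose:
  "level_loss n d F G p h = level_loss d n (\<lambda>j i. F i j) (\<lambda>j i. G i j) p h"
  unfolding level_loss_def by (simp only: crossings_transpose[of n d])

lemma crossings_eq_sum_rows:
  "crossings n d F G a b = (\<Sum>i<n. card {j \<in> {..<d}. F i j \<le> a \<and> b \<le> G i j})"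
proof -
  have "{(i,j) \<in> {..<n} \<times> {..<d}. F i j \<le> a \<and> b \<le> G i j}
      = (SIGMA i:{..<n}. {j \<in> {..<d}. F i j \<le> a \<and> b \<le> G i j})"
    by auto
  then show ?thesis
    unfolding crossings_def by simp
qed

lemma crossings_le_add:
  "crossings n d F H a b \<le> crossings n d F G a m + crossings n d G H m b"
proof -
  let ?cells = "\<lambda>P. {(i,j) \<in> {..<n} \<times> {..<d}. P i j}"
  have "?cells (\<lambda>i j. F i j \<le> a \<and> b \<le> H i j)
      \<subseteq> ?cells (\<lambda>i j. F i j \<le> a \<and> m \<le> G i j) \<union> ?cells (\<lambda>i j. G i j \<le> m \<and> b \<le> H i j)"
    by auto
  then have "card (?cells (\<lambda>i j. F i j \<le> a \<and> b \<le> H i j))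
      \<le> card (?cells (\<lambda>i j. F i j \<le> a \<and> m \<le> G i j) \<union> ?cells (\<lambda>i j. G i j \<le> m \<and> b \<le> H i j))"
    by (intro card_mono) (auto intro: finite_subset[of _ "{..<n} \<times> {..<d}"])
  also have "\<dots> \<le> card (?cells (\<lambda>i j. F i j \<le> a \<and> m \<le> G i j))
      + card (?cells (\<lambda>i j. G i j \<le> m \<and> b \<le> H i j))"
    by (rule card_Un_le)
  finally show ?thesis
    unfolding crossings_def .
qed

lemma card_filter_permutes:
  assumes "\<sigma> permutes S"
  shows "card {x \<in> S. P (\<sigma> x)} = card {x \<in> S. P x}"
proof -
  have "{x \<in> S. P (\<sigma> x)} = \<sigma> -` {x \<in> S. P x}"
    using permutes_in_image[OF assms] by auto
  moreover have "card (\<sigma> -` {x \<in> S. P x}) = card {x \<in> S. P x}"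
    using permutes_inj[OF assms] permutes_surj[OF assms] by (intro card_vimage_inj) auto
  ultimately show ?thesis
    by simp
qed

lemma crossings_permute_cols:
  assumes "\<sigma> permutes {..<d}"
  shows "crossings n d (\<lambda>i j. F i (\<sigma> j)) (\<lambda>i j. G i (\<sigma> j)) a b = crossings n d F G a b"
proof -
  have "card {j \<in> {..<d}. F i (\<sigma> j) \<le> a \<and> b \<le> G i (\<sigma> j)}
      = card {j \<in> {..<d}. F i j \<le> a \<and> b \<le> G i j}" for i
    using card_filter_permutes[OF assms, of "\<lambda>j. F i j \<le> a \<and> b \<le> G i j"] by simp
  then show ?thesis
    unfolding crossings_eq_sum_rows by simp
qed

lemma crossings_permute_rows:
  assumes "\<sigma> permutes {..<n}"
  shows "crossings n d (\<lambda>i j. F (\<sigma> i) j) (\<lambda>i j. G (\<sigma> i) j) a b = crossings n d F G a b"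
  using crossings_permute_cols[OF assms, of d "\<lambda>j i. F i j" "\<lambda>j i. G i j"]
  by (simp add: crossings_transpose[of n d])

lemma level_loss_permute_cols:
  assumes "\<sigma> permutes {..<d}"
  shows "level_loss n d (\<lambda>i j. F i (\<sigma> j)) (\<lambda>i j. G i (\<sigma> j)) p h = level_loss n d F G p h"
  unfolding level_loss_def by (simp add: crossings_permute_cols[OF assms])

lemma level_loss_permute_rows:
  assumes "\<sigma> permutes {..<n}"
  shows "level_loss n d (\<lambda>i j. F (\<sigma> i) j) (\<lambda>i j. G (\<sigma> i) j) p h = level_loss n d F G p h"
  unfolding level_loss_def by (simp add: crossings_permute_rows[OF assms])

lemma card_inter_le_card_inter_vimage:
  assumes perm: "\<sigma> permutes S" and "finite S" "X \<subseteq> S" "Y \<subseteq> S"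
    and cover: "X \<inter> Y \<noteq> {} \<Longrightarrow> S \<subseteq> X \<union> Y"
  shows "card (X \<inter> Y) \<le> card (X \<inter> \<sigma> -` Y)"
proof (cases "X \<inter> Y = {}")
  case False
  let ?Z = "\<sigma> -` Y"
  have "?Z \<subseteq> S"
    using \<open>Y \<subseteq> S\<close> permutes_in_image[OF perm] by auto
  have "card ?Z = card Y"
    using permutes_inj[OF perm] permutes_surj[OF perm] by (intro card_vimage_inj) auto
  have finite: "finite X" "finite Y" "finite ?Z"
    using \<open>finite S\<close> \<open>X \<subseteq> S\<close> \<open>Y \<subseteq> S\<close> \<open>?Z \<subseteq> S\<close> by (auto intro: finite_subset)
  have "X \<union> Y = S"
    using cover False \<open>X \<subseteq> S\<close> \<open>Y \<subseteq> S\<close> by blast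
  then have "card X + card Y = card S + card (X \<inter> Y)"
    using card_Un_Int[OF finite(1,2)] by simp
  moreover have "card X + card ?Z = card (X \<union> ?Z) + card (X \<inter> ?Z)"
    using card_Un_Int[OF finite(1,3)] .
  moreover have "card (X \<union> ?Z) \<le> card S"
    using \<open>finite S\<close> \<open>X \<subseteq> S\<close> \<open>?Z \<subseteq> S\<close> by (intro card_mono) auto
  ultimately show ?thesis
    using \<open>card ?Z = card Y\<close> by linarith
qed simp

lemma card_upset_downset_le_permute:
  fixes d :: nat
  assumes perm: "\<sigma> permutes {..<d}"
    and up: "\<And>j k. j \<le> k \<Longrightarrow> k < d \<Longrightarrow> P j \<Longrightarrow> P k"
    and down: "\<And>j k. j \<le> k \<Longrightarrow> k < d \<Longrightarrow> Q k \<Longrightarrow> Q j"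
  shows "card {j \<in> {..<d}. P j \<and> Q j} \<le> card {j \<in> {..<d}. P j \<and> Q (\<sigma> j)}"
    and "card {j \<in> {..<d}. P j \<and> Q j} \<le> card {j \<in> {..<d}. P (\<sigma> j) \<and> Q j}"
proof -
  let ?X = "{j \<in> {..<d}. P j}" and ?Y = "{j \<in> {..<d}. Q j}"
  have cover: "{..<d} \<subseteq> ?X \<union> ?Y" if "?X \<inter> ?Y \<noteq> {}"
  proof
    fix j assume "j \<in> {..<d}"
    from that obtain k where "k < d" "P k" "Q k" by auto
    show "j \<in> ?X \<union> ?Y"
    proof (cases "j \<le> k")
      case True
      then show ?thesis using down \<open>k < d\<close> \<open>Q k\<close> by auto
    next
      case False
      then have "P j"
        using up[of k j] \<open>j \<in> {..<d}\<close> \<open>P k\<close> by simp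
      then show ?thesis using \<open>j \<in> {..<d}\<close> by simp
    qed
  qed
  have "card (?X \<inter> ?Y) \<le> card (?X \<inter> \<sigma> -` ?Y)"
    using cover by (intro card_inter_le_card_inter_vimage[OF perm]) auto
  moreover have "?X \<inter> ?Y = {j \<in> {..<d}. P j \<and> Q j}"
    by auto
  moreover have "?X \<inter> \<sigma> -` ?Y = {j \<in> {..<d}. P j \<and> Q (\<sigma> j)}"
    using permutes_in_image[OF perm] by auto
  ultimately show "card {j \<in> {..<d}. P j \<and> Q j} \<le> card {j \<in> {..<d}. P j \<and> Q (\<sigma> j)}"
    by simp
  have "card (?Y \<inter> ?X) \<le> card (?Y \<inter> \<sigma> -` ?X)"
    using cover by (intro card_inter_le_card_inter_vimage[OF perm]) auto
  moreover have "?Y \<inter> ?X = {j \<in> {..<d}. P j \<and> Q j}"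
    by auto
  moreover have "?Y \<inter> \<sigma> -` ?X = {j \<in> {..<d}. P (\<sigma> j) \<and> Q j}"
    using permutes_in_image[OF perm] by auto
  ultimately show "card {j \<in> {..<d}. P j \<and> Q j} \<le> card {j \<in> {..<d}. P (\<sigma> j) \<and> Q j}"
    by simp
qed

lemma level_loss_le_permute_cols:
  assumes perm: "\<sigma> permutes {..<d}"
    and F: "\<And>i j k. i < n \<Longrightarrow> j \<le> k \<Longrightarrow> k < d \<Longrightarrow> F i k \<le> F i j"
    and G: "\<And>i j k. i < n \<Longrightarrow> j \<le> k \<Longrightarrow> k < d \<Longrightarrow> G i k \<le> G i j"
  shows "level_loss n d F G p h \<le> level_loss n d F (\<lambda>i j. G i (\<sigma> j)) p h"
proof -
  have "card {j \<in> {..<d}. F i j \<le> a \<and> b \<le> G i j}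
      \<le> card {j \<in> {..<d}. F i j \<le> a \<and> b \<le> G i (\<sigma> j)}"
    and "card {j \<in> {..<d}. G i j \<le> a \<and> b \<le> F i j}
      \<le> card {j \<in> {..<d}. G i (\<sigma> j) \<le> a \<and> b \<le> F i j}"
    if "i < n" for i a b
  proof -
    have "F i j \<le> a \<Longrightarrow> F i k \<le> a" "b \<le> G i k \<Longrightarrow> b \<le> G i j"
      "G i j \<le> a \<Longrightarrow> G i k \<le> a" "b \<le> F i k \<Longrightarrow> b \<le> F i j"
      if "j \<le> k" "k < d" for j k
      using F[OF \<open>i < n\<close> that] G[OF \<open>i < n\<close> that] by linarith+
    then show "card {j \<in> {..<d}. F i j \<le> a \<and> b \<le> G i j}
        \<le> card {j \<in> {..<d}. F i j \<le> a \<and> b \<le> G i (\<sigma> j)}"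
      and "card {j \<in> {..<d}. G i j \<le> a \<and> b \<le> F i j}
        \<le> card {j \<in> {..<d}. G i (\<sigma> j) \<le> a \<and> b \<le> F i j}"
      by (intro card_upset_downset_le_permute[OF perm]; blast)+
  qed
  then show ?thesis
    unfolding level_loss_def crossings_eq_sum_rows by (intro add_mono sum_mono) auto
qed

lemma level_loss_le_permute_rows:
  assumes perm: "\<sigma> permutes {..<n}"
    and F: "\<And>i k j. j < d \<Longrightarrow> i \<le> k \<Longrightarrow> k < n \<Longrightarrow> F k j \<le> F i j"
    and G: "\<And>i k j. j < d \<Longrightarrow> i \<le> k \<Longrightarrow> k < n \<Longrightarrow> G k j \<le> G i j"
  shows "level_loss n d F G p h \<le> level_loss n d F (\<lambda>i j. G (\<sigma> i) j) p h"
  using level_loss_le_permute_cols[OF perm, of d "\<lambda>j i. F i j" "\<lambda>j i. G i j"] F G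
  by (simp add: level_loss_transpose[of n d])

lemma level_loss_le_row_loss_add_col_loss:
  assumes rho: "\<rho> permutes {..<n}" and kappa: "\<kappa> permutes {..<d}"
  shows "level_loss n d A (\<lambda>i j. A (\<rho> i) (\<kappa> j)) p (2*h)
    \<le> level_loss n d A (\<lambda>i j. A (\<rho> i) j) (p - h) h
      + level_loss n d A (\<lambda>i j. A i (\<kappa> j)) (p + h) h"
proof -
  let ?C = "\<lambda>i j. A (\<rho> i) (\<kappa> j)"
    and ?R = "\<lambda>i j. A (\<rho> i) j" and ?K = "\<lambda>i j. A i (\<kappa> j)"
  have "crossings n d A ?C (p - 2*h) (p + 2*h)
      \<le> crossings n d A ?R (p - 2*h) p + crossings n d ?R ?C p (p + 2*h)"
    by (rule crossings_le_add)
  moreover have "crossings n d ?R ?C p (p + 2*h) = crossings n d A ?K p (p + 2*h)"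
    using crossings_permute_rows[OF rho, of d A ?K] by simp
  moreover have "crossings n d ?C A (p - 2*h) (p + 2*h)
      \<le> crossings n d ?C ?K (p - 2*h) p + crossings n d ?K A p (p + 2*h)"
    by (rule crossings_le_add)
  moreover have "crossings n d ?C ?K (p - 2*h) p = crossings n d ?R A (p - 2*h) p"
    using crossings_permute_cols[OF kappa, of n ?R A] by simp
  moreover have shift:
    "p - h - h = p - 2*h" "p - h + h = p" "p + h - h = p" "p + h + h = p + 2*h"
    by simp_all
  ultimately show ?thesis
    unfolding level_loss_def shift by linarith
qed

lemma level_loss_le_col_loss_add_row_loss:
  assumes "\<rho> permutes {..<n}" and "\<kappa> permutes {..<d}"
  shows "level_loss n d A (\<lambda>i j. A (\<rho> i) (\<kappa> j)) p (2*h)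
    \<le> level_loss n d A (\<lambda>i j. A i (\<kappa> j)) (p - h) h
      + level_loss n d A (\<lambda>i j. A (\<rho> i) j) (p + h) h"
  using level_loss_le_row_loss_add_col_loss[OF assms(2,1), of "\<lambda>j i. A i j"]
  by (simp add: level_loss_transpose[of n d])

lemma level_loss_permute_le_permute_both:
  assumes A: "bi_isotonic n d A" and rho: "\<rho> permutes {..<n}" and kappa: "\<kappa> permutes {..<d}"
  shows "level_loss n d A (\<lambda>i j. A (\<rho> i) j) p h
      \<le> level_loss n d A (\<lambda>i j. A (\<rho> i) (\<kappa> j)) p h"
    and "level_loss n d A (\<lambda>i j. A i (\<kappa> j)) p h
      \<le> level_loss n d A (\<lambda>i j. A (\<rho> i) (\<kappa> j)) p h"
proof -
  have rows: "A i k \<le> A i j" if "i < n" "j \<le> k" "k < d" for i j k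
    using A that unfolding bi_isotonic_def by blast
  have cols: "A k j \<le> A i j" if "j < d" "i \<le> k" "k < n" for i j k
    using A that unfolding bi_isotonic_def by blast
  show "level_loss n d A (\<lambda>i j. A (\<rho> i) j) p h
      \<le> level_loss n d A (\<lambda>i j. A (\<rho> i) (\<kappa> j)) p h"
    using level_loss_le_permute_cols[OF kappa, of n A "\<lambda>i j. A (\<rho> i) j"] rows
      permutes_in_image[OF rho] by simp
  show "level_loss n d A (\<lambda>i j. A i (\<kappa> j)) p h
      \<le> level_loss n d A (\<lambda>i j. A (\<rho> i) (\<kappa> j)) p h"
    using level_loss_le_permute_rows[OF rho, of d A "\<lambda>i j. A i (\<kappa> j)"] cols
      permutes_in_image[OF kappa] by simp
qed

theorem lemmaA1:
  fixes n d :: nat and \<pi> \<pi>h \<eta> \<eta>h :: "nat \<Rightarrow> nat"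
    and M :: "nat \<Rightarrow> nat \<Rightarrow> real" and p h :: real
  assumes "\<pi> permutes {..<n}" and "\<pi>h permutes {..<n}"
    and "\<eta> permutes {..<d}" and "\<eta>h permutes {..<d}"
    and "M \<in> CBiso n d \<pi> \<eta>"
    and "h \<ge> 0"
  shows "Lloss n d M \<pi> \<eta> p (2*h) \<pi>h \<eta>h
           \<le> min (2 * (Rloss n d M \<pi> (p - h) h \<pi>h + Closs n d M \<eta> (p + h) h \<eta>h))
                 (2 * (Closs n d M \<eta> (p - h) h \<eta>h + Rloss n d M \<pi> (p + h) h \<pi>h))
         \<and> Lloss n d M \<pi> \<eta> p h \<pi>h \<eta>h
           \<ge> max (Rloss n d M \<pi> p h \<pi>h) (Closs n d M \<eta> p h \<eta>h)"
proof -
  define A where "A = (\<lambda>i j. M (inv \<pi> i) (inv \<eta> j))"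
  define \<rho> where "\<rho> = \<pi> \<circ> inv \<pi>h"
  define \<kappa> where "\<kappa> = \<eta> \<circ> inv \<eta>h"
  have rho: "\<rho> permutes {..<n}" and kappa: "\<kappa> permutes {..<d}"
    unfolding \<rho>_def \<kappa>_def using assms(1-4) by (auto intro: permutes_compose permutes_inv)
  have A: "bi_isotonic n d A"
    using assms(5) unfolding CBiso_def A_def by simp
  have inv_cancel: "inv \<pi> (\<pi> i) = i" "inv \<eta> (\<eta> j) = j" for i j
    using permutes_inverses(2) assms(1,3) by metis+
  have L: "Lloss n d M \<pi> \<eta> q k \<pi>h \<eta>h = level_loss n d A (\<lambda>i j. A (\<rho> i) (\<kappa> j)) q k"
    for q k
    unfolding Lloss_eq_level_loss A_def \<rho>_def \<kappa>_def by (simp add: inv_cancel)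
  have R: "Rloss n d M \<pi> q k \<pi>h = level_loss n d A (\<lambda>i j. A (\<rho> i) j) q k" for q k
    using level_loss_permute_cols[OF permutes_inv[OF assms(3)],
        of n "\<lambda>i j. M (inv \<pi> i) j" "\<lambda>i j. M (inv \<pi>h i) j"]
    unfolding Rloss_eq_level_loss A_def \<rho>_def by (simp add: inv_cancel)
  have C: "Closs n d M \<eta> q k \<eta>h = level_loss n d A (\<lambda>i j. A i (\<kappa> j)) q k" for q k
    using level_loss_permute_rows[OF permutes_inv[OF assms(1)],
        of d "\<lambda>i j. M i (inv \<eta> j)" "\<lambda>i j. M i (inv \<eta>h j)"]
    unfolding Closs_eq_level_loss A_def \<kappa>_def by (simp add: inv_cancel)
  show ?thesis
    unfolding L R C min.bounded_iff max.bounded_iff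
    using level_loss_le_row_loss_add_col_loss[OF rho kappa, of A p h]
      level_loss_le_col_loss_add_row_loss[OF rho kappa, of A p h]
      level_loss_permute_le_permute_both[OF A rho kappa, of p h]
    by auto
qed

end
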